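(* Let $n\ge3$ and let $f$ be a $\gamma_{tr3}(P_3\square P_n)$-function such that the number of vertices $v$ with $f(v)=\emptyset$ is minimum among all $\gamma_{tr3}(P_3\square P_n)$-functions. If $j\in\{0,1,\dots,n-2\}$ satisfies $|f((1,j))|=|f((2,j))|=1$, then $|f((1,j+1))|+|f((2,j+1))|=2$.
   Context: $P_m$ denotes the directed path with vertex set $\{0,1,\dots,m-1\}$ and arcs $(i,i+1)$ for $0\le i\le m-2$. The Cartesian product $D_1\square D_2$ has vertex set $V(D_1)\times V(D_2)$, with an arc from $(x_1,y_1)$ to $(x_2,y_2)$ iff either $(x_1,x_2)$ is an arc of $D_1$ and $y_1=y_2$, or $x_1=x_2$ and $(y_1,y_2)$ is an arc of $D_2$. For a digraph $D$ and positive integer $k$, a $k$-rainbow dominating function on $D$ is $f:V(D)\to\mathcal P(\{1,\dots,k\})$ such that every $v$ with $f(v)=\emptyset$ satisfies $\bigcup_{u\in N^-(v)}f(u)=\{1,\dots,k\}$, where $N^-(v)$ is the set of in-neighbors of $v$; its weight is $\sum_v|f(v)|$. It is total if additionally the subdigraph induced by $\{v:f(v)\ne\emptyset\}$ has no isolated vertex (a vertex with neither in- nor out-neighbors in it). $\gamma_{trk}(D)$ is the minimum weight of a total $k$-rainbow dominating function, and a $\gamma_{trk}(D)$-function is one attaining it. *)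

theory Defs
  imports Main
begin

type_synonym 'a digraph = "'a set \<times> ('a \<times> 'a) set"

definition verts :: "'a digraph \<Rightarrow> 'a set" where "verts D = fst D"
definition arcs :: "'a digraph \<Rightarrow> ('a \<times> 'a) set" where "arcs D = snd D"

definition dipath :: "nat \<Rightarrow> nat digraph" where
  "dipath m = ({0..<m}, {(i, i + 1) | i. i + 1 < m})"

definition cart_prod :: "'a digraph \<Rightarrow> 'b digraph \<Rightarrow> ('a \<times> 'b) digraph" where
  "cart_prod D1 D2 =
     (verts D1 \<times> verts D2,
      {((x1, y), (x2, y)) | x1 x2 y. (x1, x2) \<in> arcs D1 \<and> y \<in> verts D2} \<union>
      {((x, y1), (x, y2)) | x y1 y2. x \<in> verts D1 \<and> (y1, y2) \<in> arcs D2})"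

definition in_nbrs :: "'a digraph \<Rightarrow> 'a \<Rightarrow> 'a set" where
  "in_nbrs D v = {u \<in> verts D. (u, v) \<in> arcs D}"

definition rainbow_dom :: "nat \<Rightarrow> 'a digraph \<Rightarrow> ('a \<Rightarrow> nat set) \<Rightarrow> bool" where
  "rainbow_dom k D f \<longleftrightarrow>
     (\<forall>v \<in> verts D. f v \<subseteq> {1..k}) \<and>
     (\<forall>v \<in> verts D. f v = {} \<longrightarrow> (\<Union>u \<in> in_nbrs D v. f u) = {1..k})"

definition total_rainbow_dom :: "nat \<Rightarrow> 'a digraph \<Rightarrow> ('a \<Rightarrow> nat set) \<Rightarrow> bool" where
  "total_rainbow_dom k D f \<longleftrightarrow> rainbow_dom k D f \<and>
     (\<forall>v \<in> verts D. f v \<noteq> {} \<longrightarrow>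
        (\<exists>u \<in> verts D. u \<noteq> v \<and> f u \<noteq> {} \<and> ((u, v) \<in> arcs D \<or> (v, u) \<in> arcs D)))"

definition weight :: "'a digraph \<Rightarrow> ('a \<Rightarrow> nat set) \<Rightarrow> nat" where
  "weight D f = (\<Sum>v \<in> verts D. card (f v))"

definition gamma_tr :: "nat \<Rightarrow> 'a digraph \<Rightarrow> nat" where
  "gamma_tr k D = (LEAST w. \<exists>f. total_rainbow_dom k D f \<and> weight D f = w)"

definition gamma_tr_function :: "nat \<Rightarrow> 'a digraph \<Rightarrow> ('a \<Rightarrow> nat set) \<Rightarrow> bool" where
  "gamma_tr_function k D f \<longleftrightarrow> total_rainbow_dom k D f \<and> weight D f = gamma_tr k D"

definition num_empty :: "'a digraph \<Rightarrow> ('a \<Rightarrow> nat set) \<Rightarrow> nat" where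
  "num_empty D f = card {v \<in> verts D. f v = {}}"

end

theory Submission
  imports Defs
begin

(* In a gamma_tr3-function with fewest empty vertices, a vertex p carrying at least two colours
   cannot spare one of them: the colour could otherwise be dropped, lowering the weight, or be
   handed to the single empty out-neighbour of p that needs it, keeping the weight and reducing
   the number of empty vertices.  In P_3 x P_n this gives |f(2,j+1)| <= 1, and |f(1,j+1)| <= 1
   when (2,j+1) is non-empty.  If (2,j+1) is empty, its in-neighbours (1,j+1) and (2,j) carry all
   three colours, so |f(1,j+1)| >= 2, and |f(1,j+1)| = 3 would let (1,j+1) spare the colour of
   (2,j).  Finally (1,j+1) is not empty: otherwise (0,j+1) would carry at least two colours, and
   one of them could be moved onto (1,j+1), or onto (0,j+2) if that is empty. *)

definition min_empty_gamma_tr_function :: "nat \<Rightarrow> 'a digraph \<Rightarrow> ('a \<Rightarrow> nat set) \<Rightarrow> bool" where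
  "min_empty_gamma_tr_function k D f \<longleftrightarrow> gamma_tr_function k D f \<and>
     (\<forall>g. gamma_tr_function k D g \<longrightarrow> num_empty D f \<le> num_empty D g)"

lemma gamma_tr_le_weight:
  assumes "total_rainbow_dom k D g"
  shows "gamma_tr k D \<le> weight D g"
  unfolding gamma_tr_def by (rule Least_le) (use assms in blast)

lemma min_empty_gamma_tr_function_le:
  assumes f: "min_empty_gamma_tr_function k D f" and g: "total_rainbow_dom k D g"
  shows "weight D f \<le> weight D g"
    and "weight D g = weight D f \<Longrightarrow> num_empty D f \<le> num_empty D g"
proof -
  have f_weight: "weight D f = gamma_tr k D"
    using f by (simp add: min_empty_gamma_tr_function_def gamma_tr_function_def)
  then show "weight D f \<le> weight D g"
    using gamma_tr_le_weight[OF g] by simp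
  assume "weight D g = weight D f"
  then have "gamma_tr_function k D g"
    using g f_weight by (simp add: gamma_tr_function_def)
  then show "num_empty D f \<le> num_empty D g"
    using f by (simp add: min_empty_gamma_tr_function_def)
qed

lemma min_empty_gamma_tr_function_total:
  "min_empty_gamma_tr_function k D f \<Longrightarrow> total_rainbow_dom k D f"
  by (simp add: min_empty_gamma_tr_function_def gamma_tr_function_def)

lemma min_empty_gamma_tr_function_range:
  "min_empty_gamma_tr_function k D f \<Longrightarrow> v \<in> verts D \<Longrightarrow> f v \<subseteq> {1..k}"
  by (simp add: min_empty_gamma_tr_function_def gamma_tr_function_def total_rainbow_dom_def
      rainbow_dom_def)

lemma weight_fun_upd:
  assumes "finite (verts D)" "p \<in> verts D"
  shows "weight D (f(p := A)) + card (f p) = weight D f + card A"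
proof -
  have "weight D (f(p := A)) = card A + (\<Sum>v\<in>verts D - {p}. card (f v))"
    unfolding weight_def using assms by (simp add: sum.remove)
  moreover have "weight D f = card (f p) + (\<Sum>v\<in>verts D - {p}. card (f v))"
    unfolding weight_def using assms by (simp add: sum.remove)
  ultimately show ?thesis by simp
qed

lemma rainbow_dom_card_in_nbrs:
  assumes "rainbow_dom k D f" "finite (verts D)" "v \<in> verts D" "f v = {}"
  shows "k \<le> (\<Sum>u\<in>in_nbrs D v. card (f u))"
proof -
  have "finite (in_nbrs D v)"
    using assms(2) by (simp add: in_nbrs_def)
  have "k = card (\<Union>u\<in>in_nbrs D v. f u)"
    using assms(1,3,4) by (simp add: rainbow_dom_def)
  also have "\<dots> \<le> (\<Sum>u\<in>in_nbrs D v. card (f u))"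
    using \<open>finite (in_nbrs D v)\<close> by (rule card_UN_le)
  finally show ?thesis .
qed

lemma total_rainbow_dom_remove_color:
  assumes f: "total_rainbow_dom k D f" and rest: "f p - {c} \<noteq> {}"
    and dom: "\<forall>v\<in>verts D. (p, v) \<in> arcs D \<longrightarrow> f v = {} \<longrightarrow>
                (\<Union>u\<in>in_nbrs D v. (f(p := f p - {c})) u) = {1..k}"
  shows "total_rainbow_dom k D (f(p := f p - {c}))" (is "total_rainbow_dom k D ?g")
  unfolding total_rainbow_dom_def rainbow_dom_def
proof (intro conjI ballI impI)
  fix v assume "v \<in> verts D"
  then show "?g v \<subseteq> {1..k}"
    using f by (auto simp: total_rainbow_dom_def rainbow_dom_def)
next
  fix v assume v: "v \<in> verts D" and "?g v = {}"
  then have "f v = {}"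
    using rest by (auto split: if_splits)
  show "(\<Union>u\<in>in_nbrs D v. ?g u) = {1..k}"
  proof (cases "(p, v) \<in> arcs D")
    case True
    then show ?thesis using dom v \<open>f v = {}\<close> by blast
  next
    case False
    then have "p \<notin> in_nbrs D v" by (simp add: in_nbrs_def)
    then have "(\<Union>u\<in>in_nbrs D v. ?g u) = (\<Union>u\<in>in_nbrs D v. f u)" by auto
    then show ?thesis
      using f v \<open>f v = {}\<close> by (simp add: total_rainbow_dom_def rainbow_dom_def)
  qed
next
  fix v assume v: "v \<in> verts D" and "?g v \<noteq> {}"
  then have "f v \<noteq> {}" by (auto split: if_splits)
  then obtain u where "u \<in> verts D" "u \<noteq> v" "f u \<noteq> {}" "(u, v) \<in> arcs D \<or> (v, u) \<in> arcs D"
    using f v by (auto simp: total_rainbow_dom_def)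
  then show "\<exists>u\<in>verts D. u \<noteq> v \<and> ?g u \<noteq> {} \<and> ((u, v) \<in> arcs D \<or> (v, u) \<in> arcs D)"
    using rest by (intro bexI[of _ u]) auto
qed

lemma total_rainbow_dom_move_color:
  assumes f: "total_rainbow_dom k D f" and c: "c \<in> f p" and rest: "f p - {c} \<noteq> {}"
    and p: "p \<in> verts D" and q: "(p, q) \<in> arcs D" "f q = {}"
    and dom: "\<forall>v\<in>verts D. (p, v) \<in> arcs D \<longrightarrow> v \<noteq> q \<longrightarrow> f v = {} \<longrightarrow>
                (\<Union>u\<in>in_nbrs D v. (f(p := f p - {c})) u) = {1..k}"
  shows "total_rainbow_dom k D (f(p := f p - {c}, q := {c}))" (is "total_rainbow_dom k D ?g")
proof -
  have f_range: "\<forall>v\<in>verts D. f v \<subseteq> {1..k}"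
    and f_dom: "\<forall>v\<in>verts D. f v = {} \<longrightarrow> (\<Union>u\<in>in_nbrs D v. f u) = {1..k}"
    using f by (simp_all add: total_rainbow_dom_def rainbow_dom_def)
  have "c \<in> {1..k}"
    using f_range c p by blast
  then have g_range: "\<forall>v\<in>verts D. ?g v \<subseteq> {1..k}"
    using f_range by auto
  have "p \<noteq> q"
    using c \<open>f q = {}\<close> by auto
  then have grow: "(f(p := f p - {c})) u \<subseteq> ?g u" for u
    using \<open>f q = {}\<close> by simp
  show ?thesis
    unfolding total_rainbow_dom_def rainbow_dom_def
  proof (intro conjI ballI impI)
    fix v assume "v \<in> verts D"
    then show "?g v \<subseteq> {1..k}" using g_range by blast
  next
    fix v assume v: "v \<in> verts D" and "?g v = {}"
    then have "v \<noteq> q" "f v = {}"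
      using rest by (auto split: if_splits)
    have "{1..k} \<subseteq> (\<Union>u\<in>in_nbrs D v. ?g u)"
    proof (cases "(p, v) \<in> arcs D")
      case True
      then have "(\<Union>u\<in>in_nbrs D v. (f(p := f p - {c})) u) = {1..k}"
        using dom v \<open>v \<noteq> q\<close> \<open>f v = {}\<close> by blast
      moreover have "(\<Union>u\<in>in_nbrs D v. (f(p := f p - {c})) u) \<subseteq> (\<Union>u\<in>in_nbrs D v. ?g u)"
        by (intro UN_mono order_refl grow)
      ultimately show ?thesis by simp
    next
      case False
      then have "p \<notin> in_nbrs D v" by (simp add: in_nbrs_def)
      then have "f u \<subseteq> ?g u" if "u \<in> in_nbrs D v" for u
      proof -
        have "u \<noteq> p" using that \<open>p \<notin> in_nbrs D v\<close> by blast
        then show ?thesis using grow[of u] by simp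
      qed
      then have "(\<Union>u\<in>in_nbrs D v. f u) \<subseteq> (\<Union>u\<in>in_nbrs D v. ?g u)"
        by (intro UN_mono order_refl)
      moreover have "(\<Union>u\<in>in_nbrs D v. f u) = {1..k}"
        using f_dom v \<open>f v = {}\<close> by blast
      ultimately show ?thesis by simp
    qed
    moreover have "(\<Union>u\<in>in_nbrs D v. ?g u) \<subseteq> {1..k}"
      using g_range by (intro UN_least) (simp add: in_nbrs_def)
    ultimately show "(\<Union>u\<in>in_nbrs D v. ?g u) = {1..k}" by blast
  next
    fix v assume v: "v \<in> verts D" and "?g v \<noteq> {}"
    show "\<exists>u\<in>verts D. u \<noteq> v \<and> ?g u \<noteq> {} \<and> ((u, v) \<in> arcs D \<or> (v, u) \<in> arcs D)"
    proof (cases "v = q")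
      case True
      then show ?thesis using p q rest by (intro bexI[of _ p]) auto
    next
      case False
      then have "f v \<noteq> {}" using \<open>?g v \<noteq> {}\<close> by (auto split: if_splits)
      then obtain u where "u \<in> verts D" "u \<noteq> v" "f u \<noteq> {}" "(u, v) \<in> arcs D \<or> (v, u) \<in> arcs D"
        using f v by (auto simp: total_rainbow_dom_def)
      then show ?thesis using rest \<open>f q = {}\<close> by (intro bexI[of _ u]) auto
    qed
  qed
qed

lemma min_empty_gamma_tr_function_shed_color:
  assumes min: "min_empty_gamma_tr_function k D f" and fin: "finite (verts D)"
    and p: "p \<in> verts D" and c: "c \<in> f p" and two: "2 \<le> card (f p)"
    and dom: "\<forall>v\<in>verts D. (p, v) \<in> arcs D \<longrightarrow> v \<noteq> q \<longrightarrow> f v = {} \<longrightarrow>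
                (\<Union>u\<in>in_nbrs D v. (f(p := f p - {c})) u) = {1..k}"
  shows False
proof -
  have f: "total_rainbow_dom k D f"
    using min by (rule min_empty_gamma_tr_function_total)
  have card_rest: "card (f p - {c}) + 1 = card (f p)"
    using c two by (simp add: card_Diff_singleton_if card_gt_0_iff)
  have rest: "f p - {c} \<noteq> {}"
  proof
    assume "f p - {c} = {}"
    then have "card (f p - {c}) = 0" by (simp only: card.empty)
    then show False using card_rest two by linarith
  qed
  show False
  proof (cases "q \<in> verts D \<and> (p, q) \<in> arcs D \<and> f q = {}")
    case True
    let ?g = "f(p := f p - {c}, q := {c})"
    have g: "total_rainbow_dom k D ?g"
      using total_rainbow_dom_move_color[OF f c rest p _ _ dom] True by blast
    have "p \<noteq> q"
      using c True by auto
    have "weight D ?g = weight D f"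
      using weight_fun_upd[OF fin p, of f "f p - {c}"]
        weight_fun_upd[OF fin, of q "f(p := f p - {c})" "{c}"] True \<open>p \<noteq> q\<close> card_rest
      by simp
    moreover have "num_empty D ?g < num_empty D f"
      unfolding num_empty_def
      by (rule psubset_card_mono) (use fin True rest in auto)
    ultimately show False
      using min_empty_gamma_tr_function_le(2)[OF min g] by simp
  next
    case False
    let ?g = "f(p := f p - {c})"
    have g: "total_rainbow_dom k D ?g"
      using total_rainbow_dom_remove_color[OF f rest] dom False by blast
    have "weight D ?g < weight D f"
      using weight_fun_upd[OF fin p, of f "f p - {c}"] card_rest by simp
    then show False
      using min_empty_gamma_tr_function_le(1)[OF min g] by simp
  qed
qed

abbreviation grid :: "nat \<Rightarrow> nat \<Rightarrow> (nat \<times> nat) digraph" where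
  "grid m n \<equiv> cart_prod (dipath m) (dipath n)"

lemma verts_grid: "verts (grid m n) = {0..<m} \<times> {0..<n}"
  by (simp add: cart_prod_def verts_def dipath_def)

lemma arc_grid_iff:
  "((a, b), (a', b')) \<in> arcs (grid m n) \<longleftrightarrow>
     (a' = a + 1 \<and> b' = b \<and> a' < m \<and> b < n) \<or> (a' = a \<and> b' = b + 1 \<and> a < m \<and> b' < n)"
  by (auto simp: cart_prod_def verts_def arcs_def dipath_def)

lemma in_nbrs_grid_Suc_Suc:
  assumes "a + 1 < m" "b + 1 < n"
  shows "in_nbrs (grid m n) (a + 1, b + 1) = {(a, b + 1), (a + 1, b)}"
  using assms by (auto simp: in_nbrs_def verts_grid arc_grid_iff)

lemma in_nbrs_grid_0_Suc:
  assumes "0 < m" "b + 1 < n"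
  shows "in_nbrs (grid m n) (0, b + 1) = {(0, b)}"
  using assms by (auto simp: in_nbrs_def verts_grid arc_grid_iff)

lemma grid_shed_color:
  assumes min: "min_empty_gamma_tr_function k (grid m n) f"
    and ab: "a < m" "b < n" and c: "c \<in> f (a, b)" and two: "2 \<le> card (f (a, b))"
    and below: "a + 1 < m \<Longrightarrow> f (a + 1, b) = {} \<Longrightarrow>
      (\<Union>u\<in>in_nbrs (grid m n) (a + 1, b). (f((a, b) := f (a, b) - {c})) u) = {1..k}"
  shows False
proof (rule min_empty_gamma_tr_function_shed_color[OF min _ _ c two, where q = "(a, b + 1)"])
  show "finite (verts (grid m n))" "(a, b) \<in> verts (grid m n)"
    using ab by (simp_all add: verts_grid)
  show "\<forall>v\<in>verts (grid m n). ((a, b), v) \<in> arcs (grid m n) \<longrightarrow> v \<noteq> (a, b + 1) \<longrightarrow> f v = {} \<longrightarrow>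
      (\<Union>u\<in>in_nbrs (grid m n) v. (f((a, b) := f (a, b) - {c})) u) = {1..k}"
  proof (intro ballI impI)
    fix v assume v: "((a, b), v) \<in> arcs (grid m n)" "v \<noteq> (a, b + 1)" "f v = {}"
    then have "v = (a + 1, b)" "a + 1 < m"
      by (cases v, auto simp: arc_grid_iff)+
    then show "(\<Union>u\<in>in_nbrs (grid m n) v. (f((a, b) := f (a, b) - {c})) u) = {1..k}"
      using below v(3) by simp
  qed
qed

lemma grid_card_le_one:
  assumes min: "min_empty_gamma_tr_function k (grid m n) f" and ab: "a < m" "b < n"
    and below: "a + 1 < m \<Longrightarrow> f (a + 1, b) \<noteq> {}"
  shows "card (f (a, b)) \<le> 1"
proof (rule ccontr)
  assume "\<not> card (f (a, b)) \<le> 1"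
  then have two: "2 \<le> card (f (a, b))" by simp
  then obtain c where "c \<in> f (a, b)"
    by (metis card.empty ex_in_conv not_numeral_le_zero)
  then show False
    by (rule grid_shed_color[OF min ab _ two]) (use below in simp)
qed

lemma grid_not_full_if_diagonal_singleton:
  assumes min: "min_empty_gamma_tr_function k (grid m n) f" and k: "2 \<le> k"
    and ab: "a + 1 < m" "b + 1 < n"
    and single: "card (f (a + 1, b)) = 1"
  shows "f (a, b + 1) \<noteq> {1..k}"
proof
  assume full: "f (a, b + 1) = {1..k}"
  obtain y where y: "f (a + 1, b) = {y}"
    using single card_1_singletonE by blast
  have "f (a + 1, b) \<subseteq> {1..k}"
    using min_empty_gamma_tr_function_range[OF min] ab by (simp add: verts_grid)
  then have "y \<in> {1..k}"
    using y by simp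
  have dom: "(\<Union>u\<in>in_nbrs (grid m n) (a + 1, b + 1). (f((a, b + 1) := f (a, b + 1) - {y})) u)
      = {1..k}"
    unfolding in_nbrs_grid_Suc_Suc[OF ab] using \<open>y \<in> {1..k}\<close> y full by auto
  have "a < m" "y \<in> f (a, b + 1)" "2 \<le> card (f (a, b + 1))"
    using ab \<open>y \<in> {1..k}\<close> full k by simp_all
  then show False
    by (rule grid_shed_color[OF min _ ab(2)]) (rule dom)
qed

lemma grid_card_above_empty:
  assumes min: "min_empty_gamma_tr_function k (grid m n) f" and k: "2 \<le> k"
    and ab: "a + 1 < m" "b + 1 < n" and empty: "f (a + 1, b + 1) = {}"
    and single: "card (f (a + 1, b)) = 1"
  shows "card (f (a, b + 1)) = k - 1"
proof -
  have range: "f (a, b + 1) \<subseteq> {1..k}"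
    using min_empty_gamma_tr_function_range[OF min] ab by (simp add: verts_grid)
  have "k \<le> (\<Sum>u\<in>in_nbrs (grid m n) (a + 1, b + 1). card (f u))"
    using min_empty_gamma_tr_function_total[OF min] empty ab
    by (intro rainbow_dom_card_in_nbrs) (simp_all add: total_rainbow_dom_def verts_grid)
  then have "k \<le> card (f (a, b + 1)) + 1"
    unfolding in_nbrs_grid_Suc_Suc[OF ab] using single by simp
  moreover have "card (f (a, b + 1)) \<noteq> k"
  proof
    assume "card (f (a, b + 1)) = k"
    then have "f (a, b + 1) = {1..k}"
      using card_subset_eq[OF _ range] by simp
    with grid_not_full_if_diagonal_singleton[OF min k ab single] show False
      by contradiction
  qed
  moreover have "card (f (a, b + 1)) \<le> k"
    using card_mono[OF _ range] by simp
  ultimately show ?thesis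
    by simp
qed

lemma grid_top_row_no_gap:
  assumes min: "min_empty_gamma_tr_function k (grid m n) f" and k: "3 \<le> k"
    and mn: "1 < m" "b + 1 < n" and single: "card (f (1, b)) = 1"
  shows "f (1, b + 1) \<noteq> {}"
proof
  assume empty: "f (1, b + 1) = {}"
  obtain x where x: "f (1, b) = {x}"
    using single card_1_singletonE by blast
  have "(\<Union>u\<in>in_nbrs (grid m n) (1, b + 1). f u) = {1..k}"
    using min_empty_gamma_tr_function_total[OF min] empty mn
    by (simp add: total_rainbow_dom_def rainbow_dom_def verts_grid)
  then have "f (0, b + 1) \<union> {x} = {1..k}"
    using in_nbrs_grid_Suc_Suc[of 0 m b n] mn x by simp
  then have "card {1..k} \<le> card (f (0, b + 1)) + 1"
    using card_Un_le[of "f (0, b + 1)" "{x}"] by simp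
  then have two: "2 \<le> card (f (0, b + 1))"
    using k by simp
  show False
  proof (cases "b + 2 < n \<and> f (0, b + 2) = {}")
    case True
    then have "(\<Union>u\<in>in_nbrs (grid m n) (0, b + 2). f u) = {1..k}"
      using min_empty_gamma_tr_function_total[OF min] mn
      by (simp add: total_rainbow_dom_def rainbow_dom_def verts_grid)
    then have full: "f (0, b + 1) = {1..k}"
      using in_nbrs_grid_0_Suc[of m "b + 1" n] mn True by (simp add: numeral_2_eq_2)
    have "x \<in> {1..k}"
      using min_empty_gamma_tr_function_range[OF min, of "(1, b)"] x mn by (simp add: verts_grid)
    then have "(\<Union>u\<in>in_nbrs (grid m n) (1, b + 1). (f((0, b + 1) := f (0, b + 1) - {x})) u) = {1..k}"
      using x full in_nbrs_grid_Suc_Suc[of 0 m b n] mn by auto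
    then show False
      using grid_shed_color[OF min, of 0 "b + 1" x] mn two full \<open>x \<in> {1..k}\<close> by simp
  next
    case False
    obtain c where c: "c \<in> f (0, b + 1)"
      using two by (metis card.empty ex_in_conv not_numeral_le_zero)
    have fin: "finite (verts (grid m n))" and p: "(0, b + 1) \<in> verts (grid m n)"
      using mn by (simp_all add: verts_grid)
    have "\<forall>v\<in>verts (grid m n). ((0, b + 1), v) \<in> arcs (grid m n) \<longrightarrow> v \<noteq> (1, b + 1) \<longrightarrow>
        f v = {} \<longrightarrow> (\<Union>u\<in>in_nbrs (grid m n) v. (f((0, b + 1) := f (0, b + 1) - {c})) u) = {1..k}"
    proof (intro ballI impI)
      fix v assume "((0, b + 1), v) \<in> arcs (grid m n)" "v \<noteq> (1, b + 1)" "f v = {}"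
      then have "b + 2 < n \<and> f (0, b + 2) = {}"
        by (cases v) (auto simp: arc_grid_iff)
      with False show "(\<Union>u\<in>in_nbrs (grid m n) v. (f((0, b + 1) := f (0, b + 1) - {c})) u) = {1..k}"
        by contradiction
    qed
    then show False
      by (rule min_empty_gamma_tr_function_shed_color[OF min fin p c two])
  qed
qed

theorem lemma4p11:
  fixes n j :: nat and f :: "nat \<times> nat \<Rightarrow> nat set"
  assumes "n \<ge> 3"
    and "gamma_tr_function 3 (cart_prod (dipath 3) (dipath n)) f"
    and "\<forall>g. gamma_tr_function 3 (cart_prod (dipath 3) (dipath n)) g \<longrightarrow>
           num_empty (cart_prod (dipath 3) (dipath n)) f \<le> num_empty (cart_prod (dipath 3) (dipath n)) g"
    and "j \<le> n - 2"
    and "card (f (1, j)) = 1" and "card (f (2, j)) = 1"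
  shows "card (f (1, j + 1)) + card (f (2, j + 1)) = 2"
proof -
  have min: "min_empty_gamma_tr_function 3 (grid 3 n) f"
    using assms(2,3) by (simp add: min_empty_gamma_tr_function_def)
  have jn: "j + 1 < n"
    using assms(1,4) by linarith
  have fin: "finite (f (a, j + 1))" if "a < 3" for a
  proof (rule finite_subset)
    show "f (a, j + 1) \<subseteq> {1..3}"
      using min_empty_gamma_tr_function_range[OF min] that jn by (simp add: verts_grid)
  qed simp
  have bottom: "card (f (2, j + 1)) \<le> 1"
    using grid_card_le_one[OF min, of 2 "j + 1"] jn by simp
  show ?thesis
  proof (cases "f (2, j + 1) = {}")
    case True
    then have "card (f (1, j + 1)) = 2"
      using grid_card_above_empty[OF min _, of 1 j] jn assms(6) by (simp add: numeral_2_eq_2)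
    with True show ?thesis
      by simp
  next
    case False
    then have "card (f (2, j + 1)) = 1"
      using bottom fin[of 2] by (simp add: le_Suc_eq)
    moreover have "card (f (1, j + 1)) \<le> 1"
      using grid_card_le_one[OF min, of 1 "j + 1"] jn False by (simp add: numeral_2_eq_2)
    moreover have "f (1, j + 1) \<noteq> {}"
      using grid_top_row_no_gap[OF min, of j] jn assms(5) by simp
    then have "card (f (1, j + 1)) \<noteq> 0"
      using fin[of 1] by simp
    ultimately show ?thesis
      by simp
  qed
qed

end
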